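(* Let $M$ be an $n$-counter Minsky machine and $k_1,\dots,k_n$ non-negative integers, and suppose $M$ can go from the initial configuration $(L_1,k_1,\dots,k_n)$ to the halting configuration $(L_0,0,\dots,0)$. Then there exists a tree-like Horn program $P$ which is a strong solution to the sequent $$l_1\otimes r_1^{k_1}\otimes\cdots\otimes r_n^{k_n},\ !\Phi_M,\ !\mathcal{K}\ \vdash\ l_0.$$
   Context: An $n$-counter Minsky machine $M$ has counters $x_1,\dots,x_n$ with non-negative integer values and a finite list of instructions labelled by labels $L_0,L_1,\dots$, each of one of the forms: (1) $L_i: x_m:=x_m+1$; goto $L_j$; (2) $L_i: x_m:=x_m-1$; goto $L_j$; (3) $L_i$: if $x_m>0$ then goto $L_j$; (4) $L_i$: if $x_m=0$ then goto $L_j$; (5) $L_0$: halt; where $i\ge 1$. A configuration is $(L,c_1,\dots,c_n)$; a computation is a finite sequence of configurations each obtained from the previous by applying an instruction of $M$ (an instruction at $L_i$ applies only in a configuration with label $L_i$; type (2) requires $x_m\ge1$, type (3) requires $x_m>0$, type (4) requires $x_m=0$). Encoding: distinct propositional literals $r_1,\dots,r_n$, $l_0,l_1,\dots$ (one per label), $\kappa_1,\dots,\kappa_n$. $r^k$ denotes the tensor of $k$ copies of $r$ (omitted when $k=0$). Instruction $I$ of type (1)–(4) gives: $\varphi_{(1)}=l_i\multimap(l_j\otimes r_m)$, $\varphi_{(2)}=(l_i\otimes r_m)\multimap l_j$, $\varphi_{(3)}=(l_i\otimes r_m)\multimap(l_j\otimes r_m)$, $\varphi_{(4)}=l_i\multimap(l_j\oplus\kappa_m)$.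 $\Phi_M$ is the multiset of $\varphi_I$ over the instructions $I$ of $M$ of types (1)–(4). $\mathcal{K}=\bigcup_{m=1}^n\mathcal{K}_m$, where $\mathcal{K}_m$ consists of $\kappa_m\multimap l_0$ and $(\kappa_m\otimes r_i)\multimap\kappa_m$ for all $i\neq m$. A tree-like Horn program is a finite rooted tree (each vertex at most two children) with edges labelled by Horn implications $X\multimap Y$ ($X,Y$ tensor products of one or more literals, $\otimes$ commutative and associative), such that each vertex with two outgoing edges has them labelled $X\multimap Y_1$, $X\multimap Y_2$ with the same $X$. For a product $W$: $\mathrm{OUT}(P,W,\text{root})=W$; for an edge $(v,w)$ labelled $X\multimap Y$, if $\mathrm{OUT}(P,W,v)$ equals $X\otimes V$ as multisets for some (possibly empty) product $V$, then $\mathrm{OUT}(P,W,w)=Y\otimes V$, else undefined. The formula used on an edge out of a one-child vertex is its label; on each edge out of a two-child vertex with labels $X\multimap Y_1$, $X\multimap Y_2$ it is $X\multimap(Y_1\oplus Y_2)$. $P$ is a strong solution to $W,\Delta,!\Gamma\vdash Z$ if every terminal vertex $w$ has $\mathrm{OUT}(P,W,w)$ defined and equal as a multiset to $Z$, every edge's used formula lies in $\Gamma$ or $\Delta$, and on every root-to-terminal path each formula of $\Delta$ (with multiplicity) is used exactly once. (Here $\Delta$ is empty.) *)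

theory Defs
  imports Main "HOL-Library.Multiset"
begin

text \<open>Labels L_i are represented by natural numbers i; counters are numbered 1..n.
  Inc i m j :  L_i: x_m := x_m + 1; goto L_j
  Dec i m j :  L_i: x_m := x_m - 1; goto L_j
  JPos i m j:  L_i: if x_m > 0 then goto L_j
  JZ i m j  :  L_i: if x_m = 0 then goto L_j
  Halt      :  L_0: halt\<close>

datatype instr =
    Inc nat nat nat
  | Dec nat nat nat
  | JPos nat nat nat
  | JZ nat nat nat
  | Halt

record minsky =
  ncount :: nat
  instrs :: "instr list"

definition instr_wf :: "nat \<Rightarrow> instr \<Rightarrow> bool" where
  "instr_wf n I = (case I of
      Inc i m j \<Rightarrow> i \<ge> 1 \<and> 1 \<le> m \<and> m \<le> n
    | Dec i m j \<Rightarrow> i \<ge> 1 \<and> 1 \<le> m \<and> m \<le> n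
    | JPos i m j \<Rightarrow> i \<ge> 1 \<and> 1 \<le> m \<and> m \<le> n
    | JZ i m j \<Rightarrow> i \<ge> 1 \<and> 1 \<le> m \<and> m \<le> n
    | Halt \<Rightarrow> True)"

definition minsky_wf :: "minsky \<Rightarrow> bool" where
  "minsky_wf M = (\<forall>I \<in> set (instrs M). instr_wf (ncount M) I)"

text \<open>A configuration (L, c_1, ..., c_n) is a pair of a label and a list of length n;
  the value of counter x_m is the list entry at position m - 1.\<close>
type_synonym config = "nat \<times> nat list"

fun instr_step :: "instr \<Rightarrow> config \<Rightarrow> config \<Rightarrow> bool" where
  "instr_step (Inc i m j) (L, c) (L', c') =
     (L = i \<and> L' = j \<and> c' = c[m - 1 := c ! (m - 1) + 1])"
| "instr_step (Dec i m j) (L, c) (L', c') =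
     (L = i \<and> L' = j \<and> c ! (m - 1) \<ge> 1 \<and> c' = c[m - 1 := c ! (m - 1) - 1])"
| "instr_step (JPos i m j) (L, c) (L', c') =
     (L = i \<and> L' = j \<and> c ! (m - 1) > 0 \<and> c' = c)"
| "instr_step (JZ i m j) (L, c) (L', c') =
     (L = i \<and> L' = j \<and> c ! (m - 1) = 0 \<and> c' = c)"
| "instr_step Halt _ _ = False"

definition mstep :: "minsky \<Rightarrow> config \<Rightarrow> config \<Rightarrow> bool" where
  "mstep M C C' = (\<exists>I \<in> set (instrs M). instr_step I C C')"

definition reaches :: "minsky \<Rightarrow> config \<Rightarrow> config \<Rightarrow> bool" where
  "reaches M C C' = (mstep M)\<^sup>*\<^sup>* C C'"

datatype lit = r nat | l nat | kap nat

text \<open>Tensor products of literals are multisets of literals (tensor is commutative and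
  associative). Formulas occurring in !Gamma: Horn implications X -o Y, and
  X -o (Y1 (+) Y2).\<close>
datatype fml =
    Imp "lit multiset" "lit multiset"
  | ImpPlus "lit multiset" "lit multiset" "lit multiset"

fun phi :: "instr \<Rightarrow> fml" where
  "phi (Inc i m j) = Imp {#l i#} {#l j, r m#}"
| "phi (Dec i m j) = Imp {#l i, r m#} {#l j#}"
| "phi (JPos i m j) = Imp {#l i, r m#} {#l j, r m#}"
| "phi (JZ i m j) = ImpPlus {#l i#} {#l j#} {#kap m#}"
| "phi Halt = Imp {#l 0#} {#l 0#}" \<comment> \<open>never used: Halt is excluded from Phi_M\<close>

definition is_halt :: "instr \<Rightarrow> bool" where
  "is_halt I = (I = Halt)"

definition PhiM :: "minsky \<Rightarrow> fml set" where
  "PhiM M = phi ` {I \<in> set (instrs M). \<not> is_halt I}"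

definition Kset :: "nat \<Rightarrow> nat \<Rightarrow> fml set" where
  "Kset n m = {Imp {#kap m#} {#l 0#}} \<union>
              {Imp {#kap m, r i#} {#kap m#} | i. 1 \<le> i \<and> i \<le> n \<and> i \<noteq> m}"

definition Kall :: "nat \<Rightarrow> fml set" where
  "Kall n = (\<Union>m \<in> {1..n}. Kset n m)"

definition init_prod :: "nat list \<Rightarrow> lit multiset" where
  "init_prod ks = {#l 1#} + (\<Sum>m \<in> {1..length ks}. replicate_mset (ks ! (m - 1)) (r m))"

text \<open>A finite rooted tree, each vertex with at most two children; edges are labelled by
  Horn implications. Step X Y P: a vertex with one outgoing edge labelled X -o Y leading to
  subtree P. Branch X Y1 P1 Y2 P2: a vertex with two outgoing edges labelled X -o Y1 and
  X -o Y2 (same X) leading to P1 and P2.\<close>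
datatype prog =
    Leaf
  | Step "lit multiset" "lit multiset" prog
  | Branch "lit multiset" "lit multiset" prog "lit multiset" prog

text \<open>P is a strong solution to W, !Gamma |- Z (with Delta empty): following the edges from
  the root starting with OUT(root) = W, OUT is defined at every vertex (the left-hand side X
  of each edge is a sub-multiset of the current product, which is replaced by Y),
  every terminal vertex has OUT = Z, every edge label is a Horn implication (nonempty
  products), and every used formula (X -o Y, resp. X -o (Y1 (+) Y2) at branching
  vertices) lies in Gamma.\<close>
fun strong_solution :: "prog \<Rightarrow> lit multiset \<Rightarrow> fml set \<Rightarrow> lit multiset \<Rightarrow> bool" where
  "strong_solution Leaf W \<Gamma> Z = (W = Z)"
| "strong_solution (Step X Y P) W \<Gamma> Z =
     (X \<noteq> {#} \<and> Y \<noteq> {#} \<and> X \<subseteq># W \<and> Imp X Y \<in> \<Gamma> \<and>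
      strong_solution P (W - X + Y) \<Gamma> Z)"
| "strong_solution (Branch X Y1 P1 Y2 P2) W \<Gamma> Z =
     (X \<noteq> {#} \<and> Y1 \<noteq> {#} \<and> Y2 \<noteq> {#} \<and> X \<subseteq># W \<and> ImpPlus X Y1 Y2 \<in> \<Gamma> \<and>
      strong_solution P1 (W - X + Y1) \<Gamma> Z \<and> strong_solution P2 (W - X + Y2) \<Gamma> Z)"

end

theory Submission
  imports Defs
begin

text \<open>A computation from (L_1, k) to (L_0, 0, ..., 0) is simulated backwards: each step of the
  machine is one edge of the program whose formula is the encoded instruction. A zero test
  branches; the branch that guesses \<open>x_m = 0\<close> produces \<open>\<kappa>_m\<close>, which can consume every
  \<open>r_i\<close> with \<open>i \<noteq> m\<close> and then turn into \<open>l_0\<close> exactly because the m-th counter is empty.\<close>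

definition solvable :: "lit multiset \<Rightarrow> fml set \<Rightarrow> lit multiset \<Rightarrow> bool" where
  "solvable W \<Gamma> Z \<longleftrightarrow> (\<exists>P. strong_solution P W \<Gamma> Z)"

lemma solvable_refl: "solvable Z \<Gamma> Z"
  unfolding solvable_def by (rule exI[of _ Leaf]) simp

lemma solvable_Imp:
  assumes "X \<noteq> {#}" "Y \<noteq> {#}" "X \<subseteq># W" "Imp X Y \<in> \<Gamma>" "solvable (W - X + Y) \<Gamma> Z"
  shows "solvable W \<Gamma> Z"
  using assms unfolding solvable_def by (metis strong_solution.simps(2))

lemma solvable_ImpPlus:
  assumes "X \<noteq> {#}" "Y\<^sub>1 \<noteq> {#}" "Y\<^sub>2 \<noteq> {#}" "X \<subseteq># W" "ImpPlus X Y\<^sub>1 Y\<^sub>2 \<in> \<Gamma>"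
    and "solvable (W - X + Y\<^sub>1) \<Gamma> Z" "solvable (W - X + Y\<^sub>2) \<Gamma> Z"
  shows "solvable W \<Gamma> Z"
  using assms unfolding solvable_def by (metis strong_solution.simps(3))

definition counters :: "nat list \<Rightarrow> lit multiset" where
  "counters c = (\<Sum>m \<in> {1..length c}. replicate_mset (c ! (m - 1)) (r m))"

definition encode :: "config \<Rightarrow> lit multiset" where
  "encode C = add_mset (l (fst C)) (counters (snd C))"

lemma count_counters:
  "count (counters c) x =
     (case x of r m \<Rightarrow> if 1 \<le> m \<and> m \<le> length c then c ! (m - 1) else 0 | _ \<Rightarrow> 0)"
  by (cases x) (auto simp: counters_def count_sum count_replicate_mset)

lemma counters_replicate_0: "counters (replicate n 0) = {#}"
  by (auto simp: multiset_eq_iff count_counters split: lit.splits)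

lemma counters_increment:
  assumes "1 \<le> m" "m \<le> length c"
  shows "counters (c[m - 1 := c ! (m - 1) + 1]) = add_mset (r m) (counters c)"
  using assms by (auto simp: multiset_eq_iff count_counters nth_list_update split: lit.splits)

lemma counters_decrement:
  assumes "1 \<le> m" "m \<le> length c" "c ! (m - 1) \<ge> 1"
  shows "counters c = add_mset (r m) (counters (c[m - 1 := c ! (m - 1) - 1]))"
  using assms by (auto simp: multiset_eq_iff count_counters nth_list_update split: lit.splits)

lemma r_in_counters:
  assumes "1 \<le> m" "m \<le> length c" "c ! (m - 1) > 0"
  shows "r m \<in># counters c"
  using assms by (simp add: count_counters flip: count_greater_zero_iff)

lemma in_counters_zero:
  assumes "c ! (m - 1) = 0" "x \<in># counters c"
  shows "\<exists>i. x = r i \<and> 1 \<le> i \<and> i \<le> length c \<and> i \<noteq> m"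
  using assms by (auto simp: count_counters split: lit.splits if_splits
                       simp flip: count_greater_zero_iff)

lemma solvable_kap:
  assumes K: "Kset n m \<subseteq> \<Gamma>"
    and R: "\<forall>x \<in># R. \<exists>i. x = r i \<and> 1 \<le> i \<and> i \<le> n \<and> i \<noteq> m"
  shows "solvable (add_mset (kap m) R) \<Gamma> {#l 0#}"
  using R
proof (induction R)
  case empty
  have "Imp {#kap m#} {#l 0#} \<in> \<Gamma>" using K by (auto simp: Kset_def)
  then show ?case
    by - (rule solvable_Imp[of "{#kap m#}" "{#l 0#}"], auto simp: solvable_refl)
next
  case (add x R)
  then obtain i where i: "x = r i" "1 \<le> i" "i \<le> n" "i \<noteq> m" by auto
  have "Imp {#kap m, r i#} {#kap m#} \<in> \<Gamma>" using K i by (auto simp: Kset_def)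
  with add i show ?case
    by - (rule solvable_Imp[of "{#kap m, r i#}" "{#kap m#}"], auto)
qed

lemma instr_step_length:
  "instr_step I C C' \<Longrightarrow> length (snd C') = length (snd C)"
  by (cases I; cases C; cases C') auto

lemma solvable_instr_step:
  assumes step: "instr_step I C C'" and wf: "instr_wf (length (snd C)) I"
    and \<Gamma>: "phi I \<in> \<Gamma>" "Kall (length (snd C)) \<subseteq> \<Gamma>"
    and next_solvable: "solvable (encode C') \<Gamma> {#l 0#}"
  shows "solvable (encode C) \<Gamma> {#l 0#}"
proof -
  obtain L c L' c' where C: "C = (L, c)" and C': "C' = (L', c')" by (cases C, cases C')
  show ?thesis
  proof (cases I)
    case (Inc i m j)
    with step wf C C' have "L = i" "1 \<le> m" "m \<le> length c"
      and "c' = c[m - 1 := c ! (m - 1) + 1]" "L' = j" by (auto simp: instr_wf_def)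
    then have "encode C - {#l i#} + {#l j, r m#} = encode C'"
      using C C' counters_increment[of m c] by (simp add: encode_def)
    with Inc \<Gamma> next_solvable \<open>L = i\<close> show ?thesis
      by - (rule solvable_Imp[of "{#l i#}" "{#l j, r m#}"], auto simp: C encode_def)
  next
    case (Dec i m j)
    with step wf C C' have "L = i" "L' = j" "1 \<le> m" "m \<le> length c" "c ! (m - 1) \<ge> 1"
      and "c' = c[m - 1 := c ! (m - 1) - 1]" by (auto simp: instr_wf_def)
    then have "encode C = add_mset (l i) (add_mset (r m) (counters c'))"
      using C counters_decrement[of m c] by (simp add: encode_def)
    with Dec \<Gamma> next_solvable \<open>L' = j\<close> show ?thesis
      by - (rule solvable_Imp[of "{#l i, r m#}" "{#l j#}"], auto simp: C' encode_def)
  next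
    case (JPos i m j)
    with step wf C C' have "L = i" "L' = j" "c' = c"
      and "r m \<in># counters c" by (auto simp: instr_wf_def r_in_counters)
    with JPos \<Gamma> next_solvable \<open>L = i\<close> \<open>L' = j\<close> \<open>c' = c\<close> show ?thesis
      by - (rule solvable_Imp[of "{#l i, r m#}" "{#l j, r m#}"],
            auto simp: C C' encode_def insert_subset_eq_iff)
  next
    case (JZ i m j)
    with step wf C C' have "L = i" "L' = j" "c' = c" "1 \<le> m" "m \<le> length c"
      and zero: "c ! (m - 1) = 0" by (auto simp: instr_wf_def)
    then have "Kset (length c) m \<subseteq> Kall (length c)"
      unfolding Kall_def by (intro UN_upper) simp
    then have "Kset (length c) m \<subseteq> \<Gamma>" using \<Gamma>(2) C by auto
    then have "solvable (add_mset (kap m) (counters c)) \<Gamma> {#l 0#}"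
      using in_counters_zero[OF zero] by (intro solvable_kap ballI) auto
    with JZ \<Gamma> next_solvable \<open>L = i\<close> \<open>L' = j\<close> \<open>c' = c\<close> show ?thesis
      by - (rule solvable_ImpPlus[of "{#l i#}" "{#l j#}" "{#kap m#}"],
            auto simp: C C' encode_def)
  next
    case Halt
    with step show ?thesis by simp
  qed
qed

lemma solvable_if_reaches_halt:
  assumes wf: "minsky_wf M"
    and reach: "(mstep M)\<^sup>*\<^sup>* C (0, replicate (ncount M) 0)"
    and len: "length (snd C) = ncount M"
  shows "solvable (encode C) (PhiM M \<union> Kall (ncount M)) {#l 0#}"
  using reach len
proof (induction rule: converse_rtranclp_induct)
  case base
  show ?case by (simp add: encode_def counters_replicate_0 solvable_refl)
next
  case (step C C')
  from step.hyps(1) obtain I where I: "I \<in> set (instrs M)" "instr_step I C C'"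
    by (auto simp: mstep_def)
  have "phi I \<in> PhiM M"
    using I by (auto simp: PhiM_def is_halt_def)
  moreover have "instr_wf (length (snd C)) I"
    using wf I(1) step.prems by (auto simp: minsky_wf_def)
  ultimately show ?case
    using solvable_instr_step[OF I(2)] step.IH instr_step_length[OF I(2)] step.prems by auto
qed

theorem lemma2:
  fixes M :: minsky and ks :: "nat list"
  assumes "minsky_wf M"
    and "length ks = ncount M"
    and "reaches M (1, ks) (0, replicate (ncount M) 0)"
  shows "\<exists>P. strong_solution P (init_prod ks) (PhiM M \<union> Kall (ncount M)) {#l 0#}"
proof -
  have "init_prod ks = encode (1, ks)"
    by (simp add: init_prod_def encode_def counters_def)
  with solvable_if_reaches_halt[of M "(1, ks)"] assms show ?thesis
    by (simp add: reaches_def solvable_def)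
qed

end
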